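(* Let $\mathcal H$ be a finite-dimensional Hilbert space of dimension $d$, and let $\mathscr L\in\mathcal L(\mathcal L(\mathcal H))$ have the minimal presentation $\mathscr L\rho=\Psi\rho-(G\rho+\rho G)-i(H\rho-\rho H)$, with $\Psi$ CP, $G,H$ hermitian, $\mathfrak J\Psi$ supported on the trace-zero operators and $\operatorname{Tr}H=0$. Suppose the semigroup $(e^{t\mathscr L})_{t\ge0}$ is trace non-increasing. Then, with $\langle\cdot\rangle$ denoting the average over the unitary group $U(\mathcal H)$ with respect to normalized Haar measure, $$\big\langle \mathscr L(U)\,U^{-1}\big\rangle=-G-\frac{\operatorname{Tr}G}{d}\,\mathrm{Id}_{\mathcal H}-iH,$$ and consequently $\|G\|\le\|\mathscr L\|$, $\|H\|\le\|\mathscr L\|$ and $\|\Psi\|\le5\|\mathscr L\|$, where $\|G\|,\|H\|$ are operator norms on $\mathcal H$ and $\|\mathscr L\|,\|\Psi\|$ are the norms of these superoperators acting on $\mathcal L(\mathcal H)$ equipped with the operator norm.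
   Context: $\mathcal L(\mathcal H)$ carries the Hilbert–Schmidt inner product $\langle A,B\rangle=\operatorname{Tr}A^\dagger B$. CP means: for every $N\ge1$, $\Psi\otimes\mathrm{Id}_{\mathcal L(\mathbb C^N)}$ maps positive semidefinite operators to positive semidefinite operators. The Jamiołkowski transform $\mathfrak J\Psi$ is the operator on $\mathcal L(\mathcal H)$ with $\langle m\overline k,(\mathfrak J\Psi)(n\overline h)\rangle=\langle m\overline n,\Psi(k\overline h)\rangle$ for all $m,n,h,k\in\mathcal H$ ($k\overline h$ is $x\mapsto k\langle h,x\rangle$); "supported on the trace-zero operators" means $\mathfrak J\Psi$ annihilates $\mathrm{Id}_{\mathcal H}$ and has range in $\{A:\operatorname{Tr}A=0\}$. Trace non-increasing means $\operatorname{Tr}e^{t\mathscr L}\rho\le\operatorname{Tr}\rho$ for all $t\ge0$ and positive semidefinite $\rho$. *)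

theory Defs
  imports "HOL-Analysis.Analysis" "HOL-Library.Complex_Order"
begin

text \<open>The Hilbert space is \<open>complex ^ 'n\<close> (dimension \<open>d = CARD('n)\<close>) with the standard
inner product; operators are matrices \<open>complex ^ 'n ^ 'n\<close>; superoperators are maps
\<open>complex ^ 'n ^ 'n \<Rightarrow> complex ^ 'n ^ 'n\<close>.\<close>

type_synonym 'n op = "complex ^ ('n::finite) ^ 'n"
type_synonym 'n sop = "('n::finite) op \<Rightarrow> 'n op"

definition cinner :: "complex ^ ('n::finite) \<Rightarrow> complex ^ 'n \<Rightarrow> complex" where
  "cinner x y = (\<Sum>i\<in>UNIV. cnj (x $ i) * y $ i)"

definition adj :: "('n::finite) op \<Rightarrow> 'n op" where
  "adj A = (\<chi> i j. cnj (A $ j $ i))"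

definition cscale :: "complex \<Rightarrow> ('n::finite) op \<Rightarrow> 'n op" (infixr "*#" 75) where
  "c *# A = (\<chi> i j. c * A $ i $ j)"

definition tr :: "('n::finite) op \<Rightarrow> complex" where
  "tr A = (\<Sum>i\<in>UNIV. A $ i $ i)"

definition ket_bra :: "complex ^ ('n::finite) \<Rightarrow> complex ^ 'n \<Rightarrow> 'n op" where
  "ket_bra k h = (\<chi> i j. k $ i * cnj (h $ j))"

definition hs :: "('n::finite) op \<Rightarrow> 'n op \<Rightarrow> complex" where
  "hs A B = tr (adj A ** B)"

definition hermitian :: "('n::finite) op \<Rightarrow> bool" where
  "hermitian A \<longleftrightarrow> adj A = A"

definition psd :: "('n::finite) op \<Rightarrow> bool" where
  "psd A \<longleftrightarrow> (\<forall>x. 0 \<le> cinner x (A *v x))"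

definition unitary :: "('n::finite) op \<Rightarrow> bool" where
  "unitary U \<longleftrightarrow> adj U ** U = mat 1"

definition clinear_sop :: "('n::finite) sop \<Rightarrow> bool" where
  "clinear_sop L \<longleftrightarrow> (\<forall>A B. L (A + B) = L A + L B) \<and> (\<forall>c A. L (c *# A) = c *# L A)"

text \<open>Positivity of a block operator \<open>\<Sum>_{j,k<N} X j k \<otimes> E_{jk}\<close> on \<open>H \<otimes> \<complex>^N\<close>.\<close>
definition block_psd :: "nat \<Rightarrow> (nat \<Rightarrow> nat \<Rightarrow> ('n::finite) op) \<Rightarrow> bool" where
  "block_psd N X \<longleftrightarrow>
     (\<forall>v :: nat \<Rightarrow> complex ^ 'n. 0 \<le> (\<Sum>j<N. \<Sum>k<N. cinner (v j) (X j k *v v k)))"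

text \<open>Complete positivity: \<open>\<Psi> \<otimes> Id_{L(\<complex>^N)}\<close> maps PSD to PSD for every \<open>N \<ge> 1\<close>;
  \<open>(\<Psi> \<otimes> Id)(\<Sum> X_{jk} \<otimes> E_{jk}) = \<Sum> \<Psi>(X_{jk}) \<otimes> E_{jk}\<close>.\<close>
definition completely_positive :: "('n::finite) sop \<Rightarrow> bool" where
  "completely_positive \<Psi> \<longleftrightarrow> clinear_sop \<Psi> \<and>
     (\<forall>N::nat. N \<ge> 1 \<longrightarrow> (\<forall>X. block_psd N X \<longrightarrow> block_psd N (\<lambda>j k. \<Psi> (X j k))))"

definition jam :: "('n::finite) sop \<Rightarrow> 'n sop" where
  "jam \<Psi> = (THE J. clinear_sop J \<and>
     (\<forall>m n h k. hs (ket_bra m k) (J (ket_bra n h)) = hs (ket_bra m n) (\<Psi> (ket_bra k h))))"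

definition supported_trace_zero :: "('n::finite) sop \<Rightarrow> bool" where
  "supported_trace_zero J \<longleftrightarrow> J (mat 1) = 0 \<and> (\<forall>A. tr (J A) = 0)"

definition sexp :: "('n::finite) sop \<Rightarrow> 'n sop" where
  "sexp L \<rho> = (\<Sum>k. scaleR (1 / fact k) ((L ^^ k) \<rho>))"

definition trace_nonincreasing :: "('n::finite) sop \<Rightarrow> bool" where
  "trace_nonincreasing L \<longleftrightarrow>
     (\<forall>t::real. t \<ge> 0 \<longrightarrow> (\<forall>\<rho>. psd \<rho> \<longrightarrow> tr (sexp (\<lambda>A. of_real t *# L A) \<rho>) \<le> tr \<rho>))"

definition opnorm :: "('n::finite) op \<Rightarrow> real" where
  "opnorm A = onorm (\<lambda>x. A *v x)"

definition sopnorm :: "('n::finite) sop \<Rightarrow> real" where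
  "sopnorm L = (SUP A\<in>{A. opnorm A \<le> 1}. opnorm (L A))"

definition haar :: "('n::finite) op measure \<Rightarrow> bool" where
  "haar \<mu> \<longleftrightarrow> emeasure \<mu> (space \<mu>) = 1 \<and> sets \<mu> = sets borel \<and>
     {U. unitary U} \<in> sets \<mu> \<and> emeasure \<mu> {U. unitary U} = 1 \<and>
     (\<forall>V. unitary V \<longrightarrow> distr \<mu> \<mu> (\<lambda>U. V ** U) = \<mu> \<and> distr \<mu> \<mu> (\<lambda>U. U ** V) = \<mu>)"

end

theory Submission
  imports Defs "HOL-Probability.Probability_Measure"
begin

(* Write E_ij for the matrix units and d for the dimension. Expanding L(U) = sum_ij U_ij L(E_ij)
   gives (L(U) U* )_pq = sum_{r,i,j} L(E_ij)_pr U_ij cnj(U_qr). Invariance of Haar measure under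
   sign flips and row swaps yields the second moments  int U_ij cnj(U_kl) = [i = k][j = l] / d,
   so the average M = <L(U) U*> has entries  M_pq = (1/d) sum_r L(E_qr)_pr.  For the minimal
   presentation the Psi-part of this sum is the entry (J Psi)(Id)_pq = 0, and the G- and H-parts
   give  M = - G - (Tr G / d) Id - i H.

   Trace non-increase says that t |-> Re Tr e^(tL) rho has non-positive derivative at 0, i.e.
   Re Tr L(rho) <= 0 for rho >= 0; for rho = |x><x| this is  2 <x, G x> >= Tr Psi(|x><x|) >= 0.
   So G >= 0 and Tr G >= 0, hence |<x, G x>| <= |Re <x, M x>| and <x, H x> = Re <x, i M x>.
   As the norm of a hermitian operator is its numerical radius, ||G||, ||H|| <= ||M||, and
   ||M|| <= ||L|| because ||L(U) U*|| <= ||L|| for unitary U.  Finally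
   Psi(rho) = L(rho) + G rho + rho G + i [H, rho] gives ||Psi|| <= ||L|| + 2 ||G|| + 2 ||H||. *)

section \<open>Matrix units and complex-linear superoperators\<close>

definition matrix_unit :: "'n \<Rightarrow> 'n \<Rightarrow> ('n::finite) op" where
  "matrix_unit i j = (\<chi> a b. if a = i \<and> b = j then 1 else 0)"

definition basis_ket :: "'n \<Rightarrow> complex ^ ('n::finite)" where
  "basis_ket i = (\<chi> j. if j = i then 1 else 0)"

lemma matrix_unit_nth [simp]: "matrix_unit i j $ a $ b = (if a = i \<and> b = j then 1 else 0)"
  by (simp add: matrix_unit_def)

lemma basis_ket_nth [simp]: "basis_ket i $ j = (if j = i then 1 else 0)"
  by (simp add: basis_ket_def)

lemma cscale_nth [simp]: "(c *# A) $ i $ j = c * A $ i $ j"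
  by (simp add: cscale_def)

lemma ket_bra_nth [simp]: "ket_bra k h $ i $ j = k $ i * cnj (h $ j)"
  by (simp add: ket_bra_def)

lemma adj_nth [simp]: "adj A $ i $ j = cnj (A $ j $ i)"
  by (simp add: adj_def)

lemma ket_bra_basis_ket: "ket_bra (basis_ket i) (basis_ket j) = matrix_unit i j"
  by (simp add: vec_eq_iff)

lemma sum_sum_delta:
  fixes f :: "'a::finite \<Rightarrow> 'b::finite \<Rightarrow> 'c::comm_monoid_add"
  shows "(\<Sum>x\<in>UNIV. \<Sum>y\<in>UNIV. if a = x \<and> b = y then f x y else 0) = f a b"
proof -
  have "(\<Sum>y\<in>UNIV. if a = x \<and> b = y then f x y else 0) = (if a = x then f x b else 0)" for x
    by (cases "a = x") simp_all
  then show ?thesis by simp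
qed

lemma matrix_unit_expansion: "(\<Sum>i\<in>UNIV. \<Sum>j\<in>UNIV. A $ i $ j *# matrix_unit i j) = (A::('n::finite) op)"
  by (simp add: vec_eq_iff if_distrib[of "\<lambda>x. _ * x"] sum_sum_delta cong: if_cong)

lemma cscale_of_real: "of_real r *# A = r *\<^sub>R (A::('n::finite) op)"
  by (simp add: vec_eq_iff of_real_def)

lemma cscale_mult_left: "(c *# A) ** B = c *# (A ** (B::('n::finite) op))"
  by (simp add: vec_eq_iff matrix_matrix_mult_def sum_distrib_left mult_ac)

lemma cscale_mult_right: "A ** (c *# B) = c *# (A ** (B::('n::finite) op))"
  by (simp add: vec_eq_iff matrix_matrix_mult_def sum_distrib_left mult_ac)

lemma cscale_mult_vec: "(c *# A) *v x = (\<chi> i. c * (A *v x) $ i)"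
  by (simp add: vec_eq_iff matrix_vector_mult_def sum_distrib_left mult_ac)

lemma matrix_add_rdistrib: "(B + C) ** A = B ** A + C ** (A::('n::finite) op)"
  by (simp add: vec_eq_iff matrix_matrix_mult_def sum.distrib distrib_right)

lemma matrix_vector_mult_uminus_left: "(- A) *v x = - (A *v x :: complex ^ (_::finite))"
  by (simp add: vec_eq_iff matrix_vector_mult_def sum_negf[symmetric])

lemma adj_adj [simp]: "adj (adj A) = A"
  by (simp add: vec_eq_iff)

lemma clinear_sopD:
  assumes "clinear_sop L"
  shows clinear_sop_add: "L (A + B) = L A + L B"
    and clinear_sop_cscale: "L (c *# A) = c *# L A"
  using assms by (simp_all add: clinear_sop_def)

lemma clinear_sop_linear: "clinear_sop L \<Longrightarrow> linear L"
  by (intro linearI) (metis clinear_sopD cscale_of_real)+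

lemma clinear_sop_expansion:
  assumes "clinear_sop L"
  shows "L A = (\<Sum>i\<in>UNIV. \<Sum>j\<in>UNIV. A $ i $ j *# L (matrix_unit i j))"
  by (subst matrix_unit_expansion[of A, symmetric])
    (simp add: linear_sum[OF clinear_sop_linear[OF assms]] clinear_sop_cscale[OF assms])

lemma clinear_sop_presentation:
  fixes \<L> \<Psi> :: "('n::finite) sop"
  assumes "\<And>\<rho>. \<L> \<rho> = \<Psi> \<rho> - (G ** \<rho> + \<rho> ** G) - \<i> *# (H ** \<rho> - \<rho> ** H)"
    and "clinear_sop \<Psi>"
  shows "clinear_sop \<L>"
proof -
  have "\<L> = (\<lambda>\<rho>. \<Psi> \<rho> - (G ** \<rho> + \<rho> ** G) - \<i> *# (H ** \<rho> - \<rho> ** H))"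
    using assms(1) by blast
  with assms(2) show ?thesis
    unfolding clinear_sop_def
    by (simp add: matrix_add_ldistrib matrix_add_rdistrib cscale_mult_left cscale_mult_right
        vec_eq_iff algebra_simps)
qed

section \<open>Inner products, traces and positivity\<close>

lemma cnj_cinner: "cnj (cinner x y) = cinner y x"
  unfolding cinner_def by (simp add: mult.commute)

lemma Re_cinner: "Re (cinner x y) = x \<bullet> y"
  unfolding cinner_def inner_vec_def inner_complex_def by (simp add: Re_sum)

lemma cinner_self: "cinner x x = of_real ((norm x)\<^sup>2)"
proof -
  have "Im (cinner x x) = 0" by (simp add: cinner_def Im_sum)
  moreover have "Re (cinner x x) = (norm x)\<^sup>2" by (simp add: Re_cinner power2_norm_eq_inner)
  ultimately show ?thesis by (simp add: complex_eq_iff)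
qed

lemma cinner_diff_right: "cinner x (y - z) = cinner x y - cinner x z"
  by (simp add: cinner_def right_diff_distrib sum_subtractf)

lemma cinner_uminus_right: "cinner x (- y) = - cinner x y"
  by (simp add: cinner_def sum_negf)

lemma cinner_cmult_right: "cinner y (\<chi> i. c * k $ i) = c * cinner y k"
  by (simp add: cinner_def sum_distrib_left mult_ac)

lemma cinner_cscale_mult_vec: "cinner x ((c *# A) *v y) = c * cinner x (A *v y)"
  by (simp add: cscale_mult_vec cinner_def sum_distrib_left mult_ac)

lemma cinner_mult_vec_adj: "cinner x (A *v y) = cinner (adj A *v x) y"
proof -
  have "cinner x (A *v y) = (\<Sum>i\<in>UNIV. \<Sum>j\<in>UNIV. cnj (x $ i) * A $ i $ j * y $ j)"
    unfolding cinner_def matrix_vector_mult_def by (simp add: sum_distrib_left mult_ac)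
  also have "\<dots> = (\<Sum>j\<in>UNIV. \<Sum>i\<in>UNIV. cnj (x $ i) * A $ i $ j * y $ j)"
    by (rule sum.swap)
  also have "\<dots> = cinner (adj A *v x) y"
    unfolding cinner_def matrix_vector_mult_def by (simp add: sum_distrib_right sum_distrib_left mult_ac)
  finally show ?thesis .
qed

lemma cinner_basis_ket: "cinner (basis_ket i) (A *v basis_ket i) = A $ i $ i"
  by (simp add: cinner_def matrix_vector_mult_def if_distrib[of cnj] if_distrib[of "\<lambda>x. x * _"]
      if_distrib[of "\<lambda>x. _ * x"] cong: if_cong)

lemma ket_bra_mult_vec: "ket_bra k h *v y = (\<chi> i. k $ i * cinner h y)"
  by (simp add: vec_eq_iff matrix_vector_mult_def cinner_def sum_distrib_left mult_ac)

lemma hermitian_inner_sym: "hermitian A \<Longrightarrow> x \<bullet> (A *v y) = (A *v x) \<bullet> y"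
  by (metis Re_cinner cinner_mult_vec_adj hermitian_def)

lemma hermitian_cinner_real: "hermitian A \<Longrightarrow> Im (cinner x (A *v x)) = 0"
proof -
  assume "hermitian A"
  then have "cnj (cinner x (A *v x)) = cinner x (A *v x)"
    by (metis cinner_mult_vec_adj cnj_cinner hermitian_def)
  then have "Im (cnj (cinner x (A *v x))) = Im (cinner x (A *v x))" by simp
  then show ?thesis by simp
qed

lemma tr_add: "tr (A + B) = tr A + tr B"
  by (simp add: tr_def sum.distrib)

lemma tr_diff: "tr (A - B) = tr A - tr B"
  by (simp add: tr_def sum_subtractf)

lemma tr_cscale: "tr (c *# A) = c * tr A"
  by (simp add: tr_def sum_distrib_left)

lemma tr_scaleR: "tr (r *\<^sub>R A) = r *\<^sub>R tr A"
  by (simp add: tr_def scaleR_sum_right)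

lemma tr_mult_ket_bra: "tr (A ** ket_bra x x) = cinner x (A *v x)"
  unfolding tr_def cinner_def matrix_matrix_mult_def matrix_vector_mult_def
  by (simp add: sum_distrib_left mult_ac)

lemma tr_ket_bra_mult: "tr (ket_bra x x ** A) = cinner x (A *v x)"
  unfolding tr_def cinner_def matrix_matrix_mult_def matrix_vector_mult_def
  by (simp add: sum_distrib_left mult_ac) (rule sum.swap)

lemma bounded_linear_Re_tr: "bounded_linear (\<lambda>A::('n::finite) op. Re (tr A))"
  unfolding linear_conv_bounded_linear[symmetric]
  by (intro linearI) (simp_all add: tr_add tr_scaleR)

lemma norm_tr_le: "cmod (tr (A::('n::finite) op)) \<le> of_nat CARD('n) * norm A"
proof -
  have "cmod (tr A) \<le> (\<Sum>i\<in>UNIV. cmod (A $ i $ i))" unfolding tr_def by (rule norm_sum)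
  also have "\<dots> \<le> (\<Sum>i\<in>(UNIV::'n set). norm A)"
    by (intro sum_mono order.trans[OF Finite_Cartesian_Product.norm_nth_le]
        Finite_Cartesian_Product.norm_nth_le)
  finally show ?thesis by simp
qed

lemma psd_tr_nonneg:
  assumes "psd A" shows "0 \<le> tr A"
proof -
  have "0 \<le> A $ i $ i" for i
    using assms[unfolded psd_def, rule_format, of "basis_ket i"] by (simp add: cinner_basis_ket)
  then show ?thesis unfolding tr_def by (simp add: sum_nonneg)
qed

lemma psd_ket_bra: "psd (ket_bra x x)"
  unfolding psd_def
proof
  fix y
  have "cinner y (ket_bra x x *v y) = cnj (cinner x y) * cinner x y"
    by (simp add: ket_bra_mult_vec cinner_cmult_right cnj_cinner mult.commute)
  also have "\<dots> = of_real ((cmod (cinner x y))\<^sup>2)"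
    by (metis complex_norm_square mult.commute)
  finally show "0 \<le> cinner y (ket_bra x x *v y)" by (simp add: less_eq_complex_def)
qed

lemma completely_positive_psd:
  assumes "completely_positive \<Psi>" and "psd \<rho>"
  shows "psd (\<Psi> \<rho>)"
proof -
  have "block_psd 1 (\<lambda>j k. \<rho>)"
    using assms(2) by (simp add: block_psd_def psd_def)
  then have "block_psd 1 (\<lambda>j k. \<Psi> \<rho>)"
    using assms(1) by (simp add: completely_positive_def)
  then show ?thesis
    unfolding block_psd_def psd_def by (auto dest: spec[where x="\<lambda>_. _"])
qed

lemma unitary_adj: "unitary U \<Longrightarrow> unitary (adj U)"
  unfolding unitary_def using matrix_left_right_inverse by auto

lemma unitary_column_norm:
  assumes "unitary U"
  shows "(\<Sum>i\<in>UNIV. U $ i $ j * cnj (U $ i $ j)) = 1"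
  using arg_cong[where f="\<lambda>A. A $ j $ j", OF assms[unfolded unitary_def]]
  by (simp add: matrix_matrix_mult_def mat_def mult.commute)

lemma unitary_entry_bound:
  assumes "unitary U"
  shows "cmod (U $ i $ j) \<le> 1"
proof -
  have "(\<Sum>k\<in>UNIV. complex_of_real ((cmod (U $ k $ j))\<^sup>2)) = 1"
    using unitary_column_norm[OF assms] by (simp only: complex_norm_square)
  then have "(\<Sum>k\<in>UNIV. (cmod (U $ k $ j))\<^sup>2) = 1"
    by (metis of_real_eq_1_iff of_real_sum)
  moreover have "(cmod (U $ i $ j))\<^sup>2 \<le> (\<Sum>k\<in>UNIV. (cmod (U $ k $ j))\<^sup>2)"
    by (rule member_le_sum) auto
  ultimately show ?thesis by (simp add: power_le_one_iff)
qed

section \<open>The Jamiolkowski transform on matrix units\<close>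

lemma hs_ket_bra: "hs (ket_bra m k) X = (\<Sum>r\<in>UNIV. \<Sum>i\<in>UNIV. cnj (m $ r) * k $ i * X $ r $ i)"
  unfolding hs_def tr_def
  by (simp add: matrix_matrix_mult_def mult_ac) (rule sum.swap)

lemma hs_matrix_unit: "hs (matrix_unit a c) X = X $ a $ c"
proof -
  have "hs (ket_bra (basis_ket a) (basis_ket c)) X
      = (\<Sum>r\<in>UNIV. \<Sum>i\<in>UNIV. if a = r \<and> c = i then X $ r $ i else 0)"
    unfolding hs_ket_bra by (intro sum.cong) auto
  then show ?thesis by (simp add: ket_bra_basis_ket sum_sum_delta)
qed

(* Evaluated on basis vectors, the defining identity of jam says
   (jam \<Psi>) (E_bd) $ a $ c = \<Psi> (E_cd) $ a $ b  for the matrix units E. *)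
definition jam_explicit :: "('n::finite) sop \<Rightarrow> 'n sop" where
  "jam_explicit \<Psi> Y = (\<chi> a c. \<Sum>b\<in>UNIV. \<Sum>d\<in>UNIV. Y $ b $ d * \<Psi> (matrix_unit c d) $ a $ b)"

lemma jam_explicit_nth:
  "jam_explicit \<Psi> Y $ a $ c = (\<Sum>b\<in>UNIV. \<Sum>d\<in>UNIV. Y $ b $ d * \<Psi> (matrix_unit c d) $ a $ b)"
  by (simp add: jam_explicit_def)

lemma clinear_sop_jam_explicit: "clinear_sop (jam_explicit \<Psi>)"
  unfolding clinear_sop_def
  by (simp add: vec_eq_iff jam_explicit_nth distrib_right distrib_left sum.distrib sum_distrib_left
      mult_ac)

lemma hs_jam_explicit:
  assumes "clinear_sop \<Psi>"
  shows "hs (ket_bra m k) (jam_explicit \<Psi> (ket_bra n h)) = hs (ket_bra m n) (\<Psi> (ket_bra k h))"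
proof -
  define T where "T r b c d = cnj (m $ r) * n $ b * k $ c * cnj (h $ d) * \<Psi> (matrix_unit c d) $ r $ b"
    for r b c d
  have "hs (ket_bra m k) (jam_explicit \<Psi> (ket_bra n h)) = (\<Sum>r\<in>UNIV. \<Sum>c\<in>UNIV. \<Sum>b\<in>UNIV. \<Sum>d\<in>UNIV. T r b c d)"
    unfolding hs_ket_bra jam_explicit_nth T_def
    by (intro sum.cong refl) (simp add: sum_distrib_left mult_ac)
  also have "\<dots> = (\<Sum>r\<in>UNIV. \<Sum>b\<in>UNIV. \<Sum>c\<in>UNIV. \<Sum>d\<in>UNIV. T r b c d)"
    by (intro sum.cong refl sum.swap)
  also have "\<dots> = hs (ket_bra m n) (\<Psi> (ket_bra k h))"
    unfolding hs_ket_bra clinear_sop_expansion[OF assms, of "ket_bra k h"] T_def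
    by (intro sum.cong refl) (simp add: sum_distrib_left mult_ac)
  finally show ?thesis .
qed

lemma jam_eq_jam_explicit:
  assumes "clinear_sop \<Psi>"
  shows "jam \<Psi> = jam_explicit \<Psi>"
  unfolding jam_def
proof (rule the_equality)
  show "clinear_sop (jam_explicit \<Psi>) \<and>
    (\<forall>m n h k. hs (ket_bra m k) (jam_explicit \<Psi> (ket_bra n h)) = hs (ket_bra m n) (\<Psi> (ket_bra k h)))"
    using clinear_sop_jam_explicit hs_jam_explicit[OF assms] by blast
next
  fix J assume J: "clinear_sop J \<and>
    (\<forall>m n h k. hs (ket_bra m k) (J (ket_bra n h)) = hs (ket_bra m n) (\<Psi> (ket_bra k h)))"
  have unit: "J (matrix_unit b d) $ a $ c = \<Psi> (matrix_unit c d) $ a $ b" for a b c d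
    using J[THEN conjunct2, rule_format, of "basis_ket a" "basis_ket c" "basis_ket b" "basis_ket d"]
    by (simp add: ket_bra_basis_ket hs_matrix_unit)
  show "J = jam_explicit \<Psi>"
  proof
    fix Y
    show "J Y = jam_explicit \<Psi> Y"
      by (subst clinear_sop_expansion[OF J[THEN conjunct1]]) (simp add: vec_eq_iff jam_explicit_nth unit)
  qed
qed

lemma jam_identity_nth:
  assumes "clinear_sop \<Psi>"
  shows "jam \<Psi> (mat 1) $ a $ c = (\<Sum>b\<in>UNIV. \<Psi> (matrix_unit c b) $ a $ b)"
  by (simp add: jam_eq_jam_explicit[OF assms] jam_explicit_nth mat_def if_distrib[of "\<lambda>x. x * _"]
      cong: if_cong)

section \<open>Second moments of Haar measure\<close>

lemma haar_prob_space: "haar \<mu> \<Longrightarrow> prob_space \<mu>"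
  by (rule prob_spaceI) (simp add: haar_def)

lemma haar_continuous_measurable:
  assumes "haar \<mu>" "continuous_on UNIV (f :: ('n::finite) op \<Rightarrow> 'b::topological_space)"
  shows "f \<in> borel_measurable \<mu>"
  using borel_measurable_continuous_onI[OF assms(2)] assms(1)
  by (simp add: haar_def cong: measurable_cong_sets)

lemma haar_AE_unitary:
  assumes "haar \<mu>" shows "AE U in \<mu>. unitary U"
proof -
  interpret prob_space \<mu> using haar_prob_space[OF assms] .
  have "prob {U. unitary U} = 1" using assms by (simp add: haar_def measure_def)
  then show ?thesis using AE_prob_1 by force
qed

lemma haar_integral_invariant:
  fixes f :: "('n::finite) op \<Rightarrow> 'b::{banach, second_countable_topology}"
  assumes "haar \<mu>" and "continuous_on UNIV g" and "distr \<mu> \<mu> g = \<mu>" and "continuous_on UNIV f"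
  shows "integral\<^sup>L \<mu> (\<lambda>U. f (g U)) = integral\<^sup>L \<mu> f"
proof -
  have "g \<in> measurable \<mu> \<mu>"
    using borel_measurable_continuous_onI[OF assms(2)] assms(1)
    by (simp add: haar_def cong: measurable_cong_sets)
  then show ?thesis
    using integral_distr[OF _ haar_continuous_measurable[OF assms(1,4)]] assms(3) by metis
qed

lemma haar_integral_mult_invariant:
  fixes f :: "('n::finite) op \<Rightarrow> 'b::{banach, second_countable_topology}"
  assumes "haar \<mu>" "unitary V" "continuous_on UNIV f"
  shows "integral\<^sup>L \<mu> (\<lambda>U. f (V ** U)) = integral\<^sup>L \<mu> f"
    and "integral\<^sup>L \<mu> (\<lambda>U. f (U ** V)) = integral\<^sup>L \<mu> f"
  using assms
  by (auto simp: haar_def matrix_matrix_mult_def intro!: haar_integral_invariant continuous_intros)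

lemma haar_integrable_moment:
  assumes "haar \<mu>"
  shows "integrable \<mu> (\<lambda>U::('n::finite) op. U $ i $ j * cnj (U $ k $ l))"
proof -
  interpret prob_space \<mu> using haar_prob_space[OF assms] .
  show ?thesis
  proof (rule integrable_const_bound[where B=1])
    show "AE U in \<mu>. norm (U $ i $ j * cnj (U $ k $ l)) \<le> 1"
      using haar_AE_unitary[OF assms]
      by eventually_elim (simp add: norm_mult mult_le_one unitary_entry_bound)
  qed (intro haar_continuous_measurable[OF assms] continuous_intros)
qed

definition flip_matrix :: "'n \<Rightarrow> ('n::finite) op" where
  "flip_matrix i = (\<chi> a b. if a = b then (if a = i then -1 else 1) else 0)"

definition swap_matrix :: "'n \<Rightarrow> 'n \<Rightarrow> ('n::finite) op" where
  "swap_matrix i k = (\<chi> a b. if b = Transposition.transpose i k a then 1 else 0)"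

lemma flip_matrix_mult:
  "(flip_matrix i ** U) $ a $ b = (if a = i then - U $ a $ b else U $ a $ b)"
  "(U ** flip_matrix i) $ a $ b = (if b = i then - U $ a $ b else U $ a $ b)"
  by (simp_all add: flip_matrix_def matrix_matrix_mult_def if_distrib[of "\<lambda>x. x * _"]
      if_distrib[of "\<lambda>x. _ * x"] cong: if_cong)

lemma eq_transpose_iff: "a = Transposition.transpose i k b \<longleftrightarrow> b = Transposition.transpose i k a"
  by auto

lemma swap_matrix_mult:
  "(swap_matrix i k ** U) $ a $ b = U $ (Transposition.transpose i k a) $ b"
  by (simp add: swap_matrix_def matrix_matrix_mult_def if_distrib[of "\<lambda>x. x * _"]
      if_distrib[of "\<lambda>x. _ * x"] eq_transpose_iff cong: if_cong)

lemma unitary_flip_matrix: "unitary (flip_matrix i)"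
  by (simp add: unitary_def vec_eq_iff matrix_matrix_mult_def flip_matrix_def mat_def
      if_distrib[of "\<lambda>x. x * _"] if_distrib[of "\<lambda>x. _ * x"] cong: if_cong)

lemma unitary_swap_matrix: "unitary (swap_matrix i k)"
proof -
  have adj: "adj (swap_matrix i k) = swap_matrix i k"
    by (auto simp: vec_eq_iff swap_matrix_def)
  have "(swap_matrix i k ** swap_matrix i k) $ a $ b = mat 1 $ a $ b" for a b
    by (simp add: swap_matrix_mult) (auto simp: swap_matrix_def mat_def dest: transpose_eq_imp_eq)
  then show ?thesis unfolding unitary_def adj by (simp add: vec_eq_iff)
qed

lemma haar_moment_offdiag:
  assumes "haar \<mu>" and "i \<noteq> k \<or> j \<noteq> l"
  shows "integral\<^sup>L \<mu> (\<lambda>U::('n::finite) op. U $ i $ j * cnj (U $ k $ l)) = 0"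
proof -
  let ?f = "\<lambda>U::'n op. U $ i $ j * cnj (U $ k $ l)"
  have cont: "continuous_on UNIV ?f" by (intro continuous_intros)
  have "integral\<^sup>L \<mu> ?f = integral\<^sup>L \<mu> (\<lambda>U. - ?f U)"
  proof (cases "i \<noteq> k")
    case True
    have "integral\<^sup>L \<mu> ?f = integral\<^sup>L \<mu> (\<lambda>U. ?f (flip_matrix i ** U))"
      by (rule haar_integral_mult_invariant(1)[OF assms(1) unitary_flip_matrix cont, symmetric])
    then show ?thesis using True by (simp add: flip_matrix_mult)
  next
    case False
    then have "j \<noteq> l" using assms(2) by simp
    have "integral\<^sup>L \<mu> ?f = integral\<^sup>L \<mu> (\<lambda>U. ?f (U ** flip_matrix j))"
      by (rule haar_integral_mult_invariant(2)[OF assms(1) unitary_flip_matrix cont, symmetric])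
    then show ?thesis using \<open>j \<noteq> l\<close> by (simp add: flip_matrix_mult)
  qed
  then show ?thesis by simp
qed

lemma haar_moment_diag:
  assumes "haar \<mu>"
  shows "integral\<^sup>L \<mu> (\<lambda>U::('n::finite) op. U $ i $ j * cnj (U $ i $ j)) = 1 / of_nat CARD('n)"
proof -
  interpret prob_space \<mu> using haar_prob_space[OF assms] .
  have row_indep: "integral\<^sup>L \<mu> (\<lambda>U::'n op. U $ k $ j * cnj (U $ k $ j))
      = integral\<^sup>L \<mu> (\<lambda>U::'n op. U $ i $ j * cnj (U $ i $ j))" for k
    using haar_integral_mult_invariant(1)[OF assms unitary_swap_matrix[of k i],
        of "\<lambda>U. U $ k $ j * cnj (U $ k $ j)"]
    by (simp add: swap_matrix_mult continuous_intros)
  have "of_nat CARD('n) * integral\<^sup>L \<mu> (\<lambda>U::'n op. U $ i $ j * cnj (U $ i $ j))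
      = (\<Sum>k\<in>UNIV. integral\<^sup>L \<mu> (\<lambda>U::'n op. U $ k $ j * cnj (U $ k $ j)))"
    by (subst sum.cong[OF refl row_indep]) simp
  also have "\<dots> = integral\<^sup>L \<mu> (\<lambda>U::'n op. \<Sum>k\<in>UNIV. U $ k $ j * cnj (U $ k $ j))"
    by (rule Bochner_Integration.integral_sum[symmetric]) (rule haar_integrable_moment[OF assms])
  also have "\<dots> = integral\<^sup>L \<mu> (\<lambda>U. 1)"
    using haar_AE_unitary[OF assms]
    by (intro integral_cong_AE haar_continuous_measurable[OF assms] continuous_intros)
      (auto elim!: eventually_mono simp: unitary_column_norm)
  finally show ?thesis by (simp add: prob_space field_simps)
qed

lemma haar_second_moment:
  assumes "haar \<mu>"
  shows "integral\<^sup>L \<mu> (\<lambda>U::('n::finite) op. U $ i $ j * cnj (U $ k $ l))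
     = (if i = k \<and> j = l then 1 / of_nat CARD('n) else 0)"
  using haar_moment_diag[OF assms] haar_moment_offdiag[OF assms] by auto

section \<open>The Haar average of L(U) U*\<close>

lemma bounded_linear_cscale_left: "bounded_linear (\<lambda>z. z *# (E::('n::finite) op))"
  unfolding linear_conv_bounded_linear[symmetric]
  by (intro linearI) (simp_all add: vec_eq_iff algebra_simps)

lemma bounded_linear_matrix_nth: "bounded_linear (\<lambda>A::('n::finite) op. A $ p $ q)"
  unfolding linear_conv_bounded_linear[symmetric]
  by (intro linearI) simp_all

lemma integrable_matrix_componentwise:
  assumes "\<And>p q. integrable \<mu> (\<lambda>U. F U $ p $ q)"
  shows "integrable \<mu> (F :: _ \<Rightarrow> ('n::finite) op)"
proof -
  have "integrable \<mu> (\<lambda>U. \<Sum>p\<in>UNIV. \<Sum>q\<in>UNIV. F U $ p $ q *# matrix_unit p q)"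
    by (intro Bochner_Integration.integrable_sum
        integrable_bounded_linear[OF bounded_linear_cscale_left assms])
  then show ?thesis by (simp add: matrix_unit_expansion)
qed

lemma integral_matrix_nth:
  assumes "integrable \<mu> (F :: _ \<Rightarrow> ('n::finite) op)"
  shows "integral\<^sup>L \<mu> F $ p $ q = integral\<^sup>L \<mu> (\<lambda>U. F U $ p $ q)"
  using integral_bounded_linear[OF bounded_linear_matrix_nth assms] by simp

lemma clinear_sop_mult_adj_nth:
  assumes "clinear_sop L"
  shows "(L U ** adj U) $ p $ q = (\<Sum>r\<in>UNIV. \<Sum>i\<in>UNIV. \<Sum>j\<in>UNIV.
           L (matrix_unit i j) $ p $ r * (U $ i $ j * cnj (U $ q $ r)))"
  by (subst clinear_sop_expansion[OF assms])
    (simp add: matrix_matrix_mult_def sum_distrib_right sum_distrib_left mult_ac)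

lemma haar_integrable_mult_adj:
  assumes "haar \<mu>" "clinear_sop L"
  shows "integrable \<mu> (\<lambda>U. L U ** adj U)"
  by (intro integrable_matrix_componentwise)
    (simp add: clinear_sop_mult_adj_nth[OF assms(2)] haar_integrable_moment[OF assms(1)])

lemma haar_average_nth:
  fixes L :: "('n::finite) sop"
  assumes "haar \<mu>" "clinear_sop L"
  shows "integral\<^sup>L \<mu> (\<lambda>U. L U ** adj U) $ p $ q
       = (\<Sum>r\<in>UNIV. L (matrix_unit q r) $ p $ r) / of_nat CARD('n)"
proof -
  have "integral\<^sup>L \<mu> (\<lambda>U. L U ** adj U) $ p $ q
      = (\<Sum>r\<in>UNIV. \<Sum>i\<in>UNIV. \<Sum>j\<in>UNIV. L (matrix_unit i j) $ p $ r *
           integral\<^sup>L \<mu> (\<lambda>U::'n op. U $ i $ j * cnj (U $ q $ r)))"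
    by (simp add: integral_matrix_nth[OF haar_integrable_mult_adj[OF assms]]
        clinear_sop_mult_adj_nth[OF assms(2)] haar_integrable_moment[OF assms(1)])
  also have "\<dots> = (\<Sum>r\<in>UNIV. \<Sum>i\<in>UNIV. \<Sum>j\<in>UNIV.
      if q = i \<and> r = j then L (matrix_unit i j) $ p $ r / of_nat CARD('n) else 0)"
    unfolding haar_second_moment[OF assms(1)] by (intro sum.cong refl) auto
  finally show ?thesis by (simp add: sum_sum_delta sum_divide_distrib)
qed

lemma sum_mult_matrix_unit_nth:
  "(\<Sum>r\<in>UNIV. (A ** matrix_unit q r) $ p $ r) = of_nat CARD('n) * A $ p $ (q::'n::finite)"
  "(\<Sum>r\<in>UNIV. (matrix_unit q r ** A) $ p $ r) = (if p = q then tr A else 0)"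
  by (simp_all add: matrix_matrix_mult_def tr_def if_distrib[of "\<lambda>x. x * _"]
      if_distrib[of "\<lambda>x. _ * x"] cong: if_cong)

lemma haar_average_presentation:
  fixes \<L> \<Psi> :: "('n::finite) sop"
  assumes pres: "\<And>\<rho>. \<L> \<rho> = \<Psi> \<rho> - (G ** \<rho> + \<rho> ** G) - \<i> *# (H ** \<rho> - \<rho> ** H)"
    and \<Psi>: "clinear_sop \<Psi>" and jam: "jam \<Psi> (mat 1) = 0" and trH: "tr H = 0"
    and haar: "haar \<mu>"
  shows "integral\<^sup>L \<mu> (\<lambda>U. \<L> U ** adj U) = - G - (tr G / of_nat CARD('n)) *# mat 1 - \<i> *# H"
proof -
  have \<L>: "clinear_sop \<L>" by (rule clinear_sop_presentation[OF pres \<Psi>])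
  have \<Psi>_part: "(\<Sum>r\<in>UNIV. \<Psi> (matrix_unit q r) $ p $ r) = 0" for p q
    using arg_cong[where f="\<lambda>A. A $ p $ q", OF jam] by (simp add: jam_identity_nth[OF \<Psi>])
  have \<L>_sum: "(\<Sum>r\<in>UNIV. \<L> (matrix_unit q r) $ p $ r)
      = - (of_nat CARD('n) * G $ p $ q + (if p = q then tr G else 0)) - \<i> * (of_nat CARD('n) * H $ p $ q)"
    for p q
    by (simp add: pres sum_subtractf sum.distrib sum_distrib_left[symmetric] sum_mult_matrix_unit_nth
        \<Psi>_part trH)
  show ?thesis
    by (simp add: vec_eq_iff haar_average_nth[OF haar \<L>] \<L>_sum mat_def field_simps)
qed

section \<open>Operator norms\<close>

lemma opnorm_mult_vec: "norm (A *v x) \<le> opnorm A * norm x"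
  unfolding opnorm_def by (rule onorm[OF matrix_vector_mul_bounded_linear])

lemma opnorm_nonneg: "0 \<le> opnorm A"
  unfolding opnorm_def by (rule onorm_pos_le[OF matrix_vector_mul_bounded_linear])

lemma opnorm_le: "0 \<le> b \<Longrightarrow> (\<And>x. norm (A *v x) \<le> b * norm x) \<Longrightarrow> opnorm A \<le> b"
  unfolding opnorm_def by (rule onorm_bound)

lemma opnorm_zero [simp]: "opnorm 0 = 0"
  by (simp add: opnorm_def onorm_zero)

lemma opnorm_mult: "opnorm (A ** B) \<le> opnorm A * opnorm B"
  using onorm_compose[OF matrix_vector_mul_bounded_linear matrix_vector_mul_bounded_linear, of A B]
  by (simp add: opnorm_def o_def matrix_vector_mul_assoc)

lemma opnorm_add: "opnorm (A + B) \<le> opnorm A + opnorm B"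
  using onorm_triangle[OF matrix_vector_mul_bounded_linear matrix_vector_mul_bounded_linear, of A B]
  by (simp add: opnorm_def matrix_vector_mult_add_rdistrib)

lemma opnorm_uminus [simp]: "opnorm (- A) = opnorm A"
  using onorm_neg[of "\<lambda>x. A *v x"] by (simp add: opnorm_def matrix_vector_mult_uminus_left)

lemma opnorm_diff: "opnorm (A - B) \<le> opnorm A + opnorm B"
  using opnorm_add[of A "- B"] by simp

lemma opnorm_cscale: "opnorm (c *# A) \<le> cmod c * opnorm A"
proof (rule opnorm_le)
  fix x
  have "norm ((c *# A) *v x) = cmod c * norm (A *v x)"
    by (simp add: cscale_mult_vec norm_vec_def norm_mult L2_set_right_distrib)
  also have "\<dots> \<le> cmod c * opnorm A * norm x"
    using opnorm_mult_vec[of A x] by (simp add: mult_left_mono mult.assoc)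
  finally show "norm ((c *# A) *v x) \<le> cmod c * opnorm A * norm x" .
qed (simp add: opnorm_nonneg)

lemma opnorm_sum: "opnorm (sum f S) \<le> (\<Sum>x\<in>S. opnorm (f x))"
  by (induction S rule: infinite_finite_induct) (auto intro: order.trans[OF opnorm_add])

lemma opnorm_mult_contraction_le:
  assumes "opnorm \<rho> \<le> 1"
  shows "opnorm (A ** \<rho>) \<le> opnorm A" and "opnorm (\<rho> ** A) \<le> opnorm A"
proof -
  have "opnorm A * opnorm \<rho> \<le> opnorm A" "opnorm \<rho> * opnorm A \<le> opnorm A"
    using assms opnorm_nonneg[of A] opnorm_nonneg[of \<rho>] by (simp_all add: mult_left_le mult_left_le_one_le)
  then show "opnorm (A ** \<rho>) \<le> opnorm A" "opnorm (\<rho> ** A) \<le> opnorm A"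
    using opnorm_mult[of A \<rho>] opnorm_mult[of \<rho> A] by linarith+
qed

lemma matrix_nth_le_opnorm: "cmod (A $ i $ j) \<le> opnorm A"
proof -
  have "A $ i $ j = (A *v basis_ket j) $ i"
    by (simp add: matrix_vector_mult_def if_distrib[of "\<lambda>x. _ * x"] cong: if_cong)
  also have "cmod \<dots> \<le> norm (A *v basis_ket j)" by (rule Finite_Cartesian_Product.norm_nth_le)
  also have "\<dots> \<le> opnorm A * norm (basis_ket j)" by (rule opnorm_mult_vec)
  also have "norm (basis_ket j) = 1"
    by (simp add: norm_vec_def L2_set_def if_distrib[of "\<lambda>x. (cmod x)\<^sup>2"] cong: if_cong)
  finally show ?thesis by simp
qed

lemma unitary_norm_mult_vec: "unitary U \<Longrightarrow> norm (U *v x) = norm x"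
proof -
  assume "unitary U"
  then have "(U *v x) \<bullet> (U *v x) = x \<bullet> x"
    by (metis Re_cinner cinner_mult_vec_adj matrix_vector_mul_assoc matrix_vector_mul_lid unitary_def)
  then show ?thesis by (simp add: norm_eq_sqrt_inner)
qed

lemma unitary_opnorm_le: "unitary U \<Longrightarrow> opnorm U \<le> 1"
  by (rule opnorm_le) (simp_all add: unitary_norm_mult_vec)

lemma bdd_above_sopnorm:
  fixes L :: "('n::finite) sop"
  assumes "clinear_sop L"
  shows "bdd_above ((\<lambda>A. opnorm (L A)) ` {A. opnorm A \<le> 1})"
proof (rule bdd_aboveI2)
  fix A :: "'n op" assume "A \<in> {A. opnorm A \<le> 1}"
  then have A: "cmod (A $ i $ j) \<le> 1" for i j
    using matrix_nth_le_opnorm order.trans by blast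
  have "opnorm (L A) \<le> (\<Sum>i\<in>UNIV. opnorm (\<Sum>j\<in>UNIV. A $ i $ j *# L (matrix_unit i j)))"
    unfolding clinear_sop_expansion[OF assms, of A] by (rule opnorm_sum)
  also have "\<dots> \<le> (\<Sum>i\<in>UNIV. \<Sum>j\<in>UNIV. opnorm (A $ i $ j *# L (matrix_unit i j)))"
    by (intro sum_mono opnorm_sum)
  also have "\<dots> \<le> (\<Sum>i\<in>UNIV. \<Sum>j\<in>UNIV. cmod (A $ i $ j) * opnorm (L (matrix_unit i j)))"
    by (intro sum_mono opnorm_cscale)
  also have "\<dots> \<le> (\<Sum>i\<in>UNIV. \<Sum>j\<in>UNIV. opnorm (L (matrix_unit i j)))"
    by (intro sum_mono mult_left_le_one_le opnorm_nonneg norm_ge_zero A)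
  finally show "opnorm (L A) \<le> (\<Sum>i\<in>UNIV. \<Sum>j\<in>UNIV. opnorm (L (matrix_unit i j)))" .
qed

lemma opnorm_le_sopnorm: "clinear_sop L \<Longrightarrow> opnorm A \<le> 1 \<Longrightarrow> opnorm (L A) \<le> sopnorm L"
  unfolding sopnorm_def by (rule cSUP_upper) (auto simp: bdd_above_sopnorm)

lemma sopnorm_le:
  fixes L :: "('n::finite) sop"
  assumes "\<And>A. opnorm A \<le> 1 \<Longrightarrow> opnorm (L A) \<le> c"
  shows "sopnorm L \<le> c"
  unfolding sopnorm_def
proof (rule cSUP_least)
  have "0 \<in> {A::'n op. opnorm A \<le> 1}" by simp
  then show "{A::'n op. opnorm A \<le> 1} \<noteq> {}" by blast
qed (simp add: assms)

lemma bounded_linear_mult_vec_left: "bounded_linear (\<lambda>A::('n::finite) op. A *v x)"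
  unfolding linear_conv_bounded_linear[symmetric]
  by (intro linearI)
    (simp_all add: vec_eq_iff matrix_vector_mult_def scaleR_sum_right distrib_right sum.distrib)

lemma opnorm_haar_average_le:
  fixes L :: "('n::finite) sop"
  assumes haar: "haar \<mu>" and L: "clinear_sop L"
  shows "opnorm (integral\<^sup>L \<mu> (\<lambda>U. L U ** adj U)) \<le> sopnorm L"
proof -
  interpret prob_space \<mu> using haar_prob_space[OF haar] .
  have sopnorm_nonneg: "0 \<le> sopnorm L"
    using opnorm_nonneg[of "L 0"] opnorm_le_sopnorm[OF L, of 0] by simp
  have integrable: "integrable \<mu> (\<lambda>U. L U ** adj U)"
    by (rule haar_integrable_mult_adj[OF haar L])
  show ?thesis
  proof (rule opnorm_le[OF sopnorm_nonneg])
    fix x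
    have "norm (integral\<^sup>L \<mu> (\<lambda>U. L U ** adj U) *v x) = norm (integral\<^sup>L \<mu> (\<lambda>U. (L U ** adj U) *v x))"
      using integral_bounded_linear[OF bounded_linear_mult_vec_left integrable] by simp
    also have "\<dots> \<le> integral\<^sup>L \<mu> (\<lambda>U. norm ((L U ** adj U) *v x))"
      by (rule integral_norm_bound)
    also have "\<dots> \<le> integral\<^sup>L \<mu> (\<lambda>U. sopnorm L * norm x)"
    proof (rule integral_mono_AE)
      show "integrable \<mu> (\<lambda>U. norm ((L U ** adj U) *v x))"
        by (intro integrable_norm integrable_bounded_linear[OF bounded_linear_mult_vec_left integrable])
      show "AE U in \<mu>. norm ((L U ** adj U) *v x) \<le> sopnorm L * norm x"
        using haar_AE_unitary[OF haar]
      proof eventually_elim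
        case (elim U)
        have "opnorm (L U ** adj U) \<le> opnorm (L U) * opnorm (adj U)" by (rule opnorm_mult)
        also have "\<dots> \<le> sopnorm L * 1"
          by (intro mult_mono opnorm_le_sopnorm[OF L] unitary_opnorm_le unitary_adj elim
              sopnorm_nonneg opnorm_nonneg)
        finally have "opnorm (L U ** adj U) \<le> sopnorm L" by simp
        then have "opnorm (L U ** adj U) * norm x \<le> sopnorm L * norm x"
          by (rule mult_right_mono) simp
        with opnorm_mult_vec[of "L U ** adj U" x] show ?case by linarith
      qed
    qed simp
    also have "\<dots> = sopnorm L * norm x" by (simp add: prob_space)
    finally show "norm (integral\<^sup>L \<mu> (\<lambda>U. L U ** adj U) *v x) \<le> sopnorm L * norm x" .
  qed
qed

lemma hermitian_opnorm_le:
  assumes h: "hermitian A" and w: "0 \<le> w" and bound: "\<And>x. \<bar>x \<bullet> (A *v x)\<bar> \<le> w * (norm x)\<^sup>2"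
  shows "opnorm A \<le> w"
proof (rule opnorm_le[OF w])
  fix x
  show "norm (A *v x) \<le> w * norm x"
  proof (cases "A *v x = 0")
    case True then show ?thesis using w by simp
  next
    case False
    define y where "y = (norm x / norm (A *v x)) *\<^sub>R (A *v x)"
    have nAx: "norm (A *v x) > 0" using False by simp
    have ny: "norm y = norm x" unfolding y_def using nAx by simp
    have yAx: "y \<bullet> (A *v x) = norm x * norm (A *v x)"
      unfolding y_def using nAx by (simp add: power2_norm_eq_inner[symmetric] power2_eq_square)
    have "(x + y) \<bullet> (A *v (x + y)) - (x - y) \<bullet> (A *v (x - y)) = 4 * (y \<bullet> (A *v x))"
      using hermitian_inner_sym[OF h, of x y]
      by (simp add: matrix_vector_right_distrib matrix_vector_mult_diff_distrib inner_add_left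
          inner_add_right inner_diff_left inner_diff_right inner_commute algebra_simps)
    then have "4 * (y \<bullet> (A *v x)) \<le> w * (norm (x + y))\<^sup>2 + w * (norm (x - y))\<^sup>2"
      using bound[of "x + y"] bound[of "x - y"] by linarith
    also have "\<dots> = w * (2 * (norm x)\<^sup>2 + 2 * (norm y)\<^sup>2)"
      by (simp add: power2_norm_eq_inner inner_add_left inner_add_right inner_diff_left
          inner_diff_right inner_commute algebra_simps)
    finally have "norm x * norm (A *v x) \<le> norm x * (w * norm x)"
      using yAx ny by (simp add: power2_eq_square algebra_simps)
    moreover have "norm x > 0" using False by (metis matrix_vector_mult_0_right zero_less_norm_iff)
    ultimately show ?thesis by simp
  qed
qed

lemma hermitian_opnorm_le_opnorm:
  assumes "hermitian A" and "\<And>x. \<bar>x \<bullet> (A *v x)\<bar> \<le> \<bar>x \<bullet> (M *v x)\<bar>"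
  shows "opnorm A \<le> opnorm M"
proof (rule hermitian_opnorm_le[OF assms(1) opnorm_nonneg])
  fix x
  have "\<bar>x \<bullet> (M *v x)\<bar> \<le> norm x * norm (M *v x)" by (rule Cauchy_Schwarz_ineq2)
  also have "\<dots> \<le> norm x * (opnorm M * norm x)" by (intro mult_left_mono opnorm_mult_vec) simp
  finally show "\<bar>x \<bullet> (A *v x)\<bar> \<le> opnorm M * (norm x)\<^sup>2"
    using assms(2)[of x] by (simp add: power2_eq_square mult_ac)
qed

lemma cinner_average_form:
  "cinner x ((- G - c *# mat 1 - \<i> *# H) *v x)
     = - cinner x (G *v x) - c * of_real ((norm x)\<^sup>2) - \<i> * cinner x (H *v x)"
  by (simp add: matrix_vector_mult_diff_rdistrib cinner_diff_right cinner_cscale_mult_vec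
      cinner_self matrix_vector_mult_uminus_left cinner_uminus_right)

lemma opnorm_le_opnorm_average:
  assumes G: "psd G" "hermitian G" and H: "hermitian H" and c: "0 \<le> c"
  shows "opnorm G \<le> opnorm (- G - c *# mat 1 - \<i> *# H)"
    and "opnorm H \<le> opnorm (- G - c *# mat 1 - \<i> *# H)"
proof -
  let ?M = "- G - c *# mat 1 - \<i> *# H"
  have real: "Im (cinner x (G *v x)) = 0" "Im (cinner x (H *v x)) = 0" "Im c = 0" for x
    using hermitian_cinner_real[OF G(2)] hermitian_cinner_real[OF H] c
    by (simp_all add: less_eq_complex_def)
  show "opnorm G \<le> opnorm ?M"
  proof (rule hermitian_opnorm_le_opnorm[OF G(2)])
    fix x
    have "0 \<le> Re (cinner x (G *v x))" "0 \<le> Re c * (norm x)\<^sup>2"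
      using G(1) c by (simp_all add: psd_def less_eq_complex_def)
    moreover have "x \<bullet> (?M *v x) = - (Re (cinner x (G *v x)) + Re c * (norm x)\<^sup>2)"
      unfolding Re_cinner[symmetric] cinner_average_form using real by simp
    ultimately show "\<bar>x \<bullet> (G *v x)\<bar> \<le> \<bar>x \<bullet> (?M *v x)\<bar>"
      by (simp add: Re_cinner[symmetric])
  qed
  have "opnorm H \<le> opnorm (\<i> *# ?M)"
  proof (rule hermitian_opnorm_le_opnorm[OF H])
    fix x
    have "x \<bullet> ((\<i> *# ?M) *v x) = x \<bullet> (H *v x)"
      unfolding Re_cinner[symmetric] cinner_cscale_mult_vec cinner_average_form
      using real by (simp add: algebra_simps)
    then show "\<bar>x \<bullet> (H *v x)\<bar> \<le> \<bar>x \<bullet> ((\<i> *# ?M) *v x)\<bar>" by simp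
  qed
  also have "\<dots> \<le> opnorm ?M"
    using opnorm_cscale[of \<i> ?M] by simp
  finally show "opnorm H \<le> opnorm ?M" .
qed

lemma opnorm_presentation_terms_le:
  assumes "opnorm \<rho> \<le> 1"
  shows "opnorm (A + (G ** \<rho> + \<rho> ** G) + \<i> *# (H ** \<rho> - \<rho> ** H))
       \<le> opnorm A + 2 * opnorm G + 2 * opnorm H"
proof -
  have "opnorm (\<i> *# (H ** \<rho> - \<rho> ** H)) \<le> opnorm (H ** \<rho>) + opnorm (\<rho> ** H)"
    using opnorm_cscale[of \<i> "H ** \<rho> - \<rho> ** H"] opnorm_diff[of "H ** \<rho>" "\<rho> ** H"] by simp
  then show ?thesis
    using opnorm_add[of "A + (G ** \<rho> + \<rho> ** G)" "\<i> *# (H ** \<rho> - \<rho> ** H)"]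
      opnorm_add[of A "G ** \<rho> + \<rho> ** G"] opnorm_add[of "G ** \<rho>" "\<rho> ** G"]
    using opnorm_mult_contraction_le[OF assms, of G] opnorm_mult_contraction_le[OF assms, of H]
    by linarith
qed

section \<open>Trace non-increasing semigroups\<close>

lemma exp_series_has_real_derivative_at_0:
  fixes b :: "nat \<Rightarrow> real"
  assumes bound: "\<And>k. \<bar>b k\<bar> \<le> B * C ^ k"
  shows "((\<lambda>t. \<Sum>k. (t ^ k / fact k) * b k) has_real_derivative b 1) (at 0)"
proof -
  define c where "c k = b k / fact k" for k
  have "summable (\<lambda>k. c k * y ^ k)" for y :: real
  proof (rule summable_comparison_test)
    show "summable (\<lambda>k. \<bar>B\<bar> * (inverse (fact k) * \<bar>C * y\<bar> ^ k))"
      by (intro summable_mult summable_exp)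
    show "\<exists>N. \<forall>k\<ge>N. norm (c k * y ^ k) \<le> \<bar>B\<bar> * (inverse (fact k) * \<bar>C * y\<bar> ^ k)"
    proof (intro exI allI impI)
      fix k
      have "\<bar>b k\<bar> \<le> \<bar>B\<bar> * \<bar>C\<bar> ^ k"
        using bound[of k] abs_ge_self[of "B * C ^ k"] by (simp add: abs_mult power_abs)
      then have "\<bar>b k\<bar> * \<bar>y\<bar> ^ k \<le> (\<bar>B\<bar> * \<bar>C\<bar> ^ k) * \<bar>y\<bar> ^ k"
        by (rule mult_right_mono) simp
      then show "norm (c k * y ^ k) \<le> \<bar>B\<bar> * (inverse (fact k) * \<bar>C * y\<bar> ^ k)"
        by (simp add: c_def abs_mult power_abs power_mult_distrib divide_right_mono field_simps)
    qed
  qed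
  then have "((\<lambda>t. \<Sum>k. c k * t ^ k) has_real_derivative (\<Sum>k. diffs c k * 0 ^ k)) (at 0)"
    by (rule termdiffs_strong_converges_everywhere)
  moreover have "(\<Sum>k. diffs c k * 0 ^ k) = b 1"
    by (simp only: powser_zero) (simp add: diffs_def c_def)
  moreover have "(\<lambda>t. \<Sum>k. c k * t ^ k) = (\<lambda>t. \<Sum>k. (t ^ k / fact k) * b k)"
    by (simp add: c_def field_simps)
  ultimately show ?thesis by simp
qed

lemma nonpos_derivative_of_le_at_0:
  fixes f :: "real \<Rightarrow> real"
  assumes "(f has_real_derivative D) (at 0)" and "\<And>t. 0 < t \<Longrightarrow> f t \<le> f 0"
  shows "D \<le> 0"
proof (rule ccontr)
  assume "\<not> D \<le> 0"
  then obtain d where "d > 0" and "\<And>h. 0 < h \<Longrightarrow> h < d \<Longrightarrow> f 0 < f h"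
    using DERIV_pos_inc_right[OF assms(1)] by force
  then have "f 0 < f (d / 2)" by simp
  with assms(2)[of "d / 2"] \<open>d > 0\<close> show False by simp
qed

lemma clinear_sop_bounded_linear: "clinear_sop L \<Longrightarrow> bounded_linear (L :: ('n::finite) sop)"
  using clinear_sop_linear linear_conv_bounded_linear by blast

lemma bounded_linear_funpow_bound:
  fixes L :: "'a::real_normed_vector \<Rightarrow> 'a"
  assumes "bounded_linear L"
  obtains K where "\<And>k x. norm ((L ^^ k) x) \<le> K ^ k * norm x"
proof -
  obtain K where K: "K > 0" "\<And>x. norm (L x) \<le> norm x * K"
    using bounded_linear.pos_bounded[OF assms] by blast
  have "norm ((L ^^ k) x) \<le> K ^ k * norm x" for k x
  proof (induction k)
    case (Suc k)
    have "norm ((L ^^ Suc k) x) \<le> norm ((L ^^ k) x) * K" using K(2) by simp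
    also have "\<dots> \<le> K ^ k * norm x * K" using Suc K(1) by (intro mult_right_mono) auto
    finally show ?case by (simp add: mult_ac)
  qed simp
  then show ?thesis by (rule that)
qed

lemma Re_tr_sexp_scaled:
  fixes L :: "('n::finite) sop"
  assumes L: "clinear_sop L"
  shows "Re (tr (sexp (\<lambda>A. of_real t *# L A) \<rho>)) = (\<Sum>k. (t ^ k / fact k) * Re (tr ((L ^^ k) \<rho>)))"
proof -
  obtain K where K: "\<And>k A. norm ((L ^^ k) A) \<le> K ^ k * norm A"
    using bounded_linear_funpow_bound[OF clinear_sop_bounded_linear[OF L]] by blast
  define X where "X k = (1 / fact k) *\<^sub>R ((\<lambda>A. of_real t *# L A) ^^ k) \<rho>" for k
  have X: "X k = (t ^ k / fact k) *\<^sub>R (L ^^ k) \<rho>" for k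
  proof -
    have "((\<lambda>A. of_real t *# L A) ^^ k) A = t ^ k *\<^sub>R (L ^^ k) A" for A
      by (induction k) (simp_all add: cscale_of_real linear_cmul[OF clinear_sop_linear[OF L]])
    then show ?thesis by (simp add: X_def)
  qed
  have "norm (X k) \<le> norm \<rho> * (inverse (fact k) * (\<bar>t\<bar> * K) ^ k)" for k
  proof -
    have "norm (X k) = (\<bar>t\<bar> ^ k / fact k) * norm ((L ^^ k) \<rho>)" by (simp add: X power_abs)
    also have "\<dots> \<le> (\<bar>t\<bar> ^ k / fact k) * (K ^ k * norm \<rho>)" by (intro mult_left_mono K) simp
    finally show ?thesis by (simp add: power_mult_distrib field_simps)
  qed
  then have "summable X"
    by (intro summable_comparison_test[OF _ summable_mult[OF summable_exp]]) blast
  then have "Re (tr (suminf X)) = (\<Sum>k. Re (tr (X k)))"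
    by (rule bounded_linear.suminf[OF bounded_linear_Re_tr])
  moreover have "sexp (\<lambda>A. of_real t *# L A) \<rho> = suminf X"
    unfolding sexp_def X_def ..
  moreover have "Re (tr (X k)) = (t ^ k / fact k) * Re (tr ((L ^^ k) \<rho>))" for k
    by (simp add: X tr_scaleR)
  ultimately show ?thesis by simp
qed

lemma trace_nonincreasing_Re_tr_nonpos:
  fixes L :: "('n::finite) sop"
  assumes L: "clinear_sop L" and tni: "trace_nonincreasing L" and \<rho>: "psd \<rho>"
  shows "Re (tr (L \<rho>)) \<le> 0"
proof -
  obtain K where K: "\<And>k A. norm ((L ^^ k) A) \<le> K ^ k * norm A"
    using bounded_linear_funpow_bound[OF clinear_sop_bounded_linear[OF L]] by blast
  define b where "b k = Re (tr ((L ^^ k) \<rho>))" for k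
  define f where "f t = (\<Sum>k. (t ^ k / fact k) * b k)" for t
  have "\<bar>b k\<bar> \<le> (of_nat CARD('n) * norm \<rho>) * K ^ k" for k
  proof -
    have "\<bar>b k\<bar> \<le> of_nat CARD('n) * norm ((L ^^ k) \<rho>)"
      unfolding b_def using abs_Re_le_cmod norm_tr_le order.trans by blast
    also have "\<dots> \<le> of_nat CARD('n) * (K ^ k * norm \<rho>)" by (intro mult_left_mono K) simp
    finally show ?thesis by (simp add: mult_ac)
  qed
  then have "(f has_real_derivative b 1) (at 0)"
    unfolding f_def by (rule exp_series_has_real_derivative_at_0)
  moreover have "f t \<le> f 0" if "0 < t" for t
  proof -
    have "tr (sexp (\<lambda>A. of_real t *# L A) \<rho>) \<le> tr \<rho>"
      using tni \<rho> that unfolding trace_nonincreasing_def by simp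
    then have "f t \<le> b 0"
      by (simp add: less_eq_complex_def f_def b_def Re_tr_sexp_scaled[OF L])
    moreover have "f 0 = b 0"
      using powser_zero[of "\<lambda>k. b k / fact k"] by (simp add: f_def field_simps)
    ultimately show ?thesis by simp
  qed
  ultimately have "b 1 \<le> 0" by (rule nonpos_derivative_of_le_at_0)
  then show ?thesis by (simp add: b_def)
qed

lemma presentation_psd:
  fixes \<L> \<Psi> :: "('n::finite) sop"
  assumes pres: "\<And>\<rho>. \<L> \<rho> = \<Psi> \<rho> - (G ** \<rho> + \<rho> ** G) - \<i> *# (H ** \<rho> - \<rho> ** H)"
    and cp: "completely_positive \<Psi>" and G: "hermitian G" and tni: "trace_nonincreasing \<L>"
  shows "psd G"
  unfolding psd_def
proof
  fix x
  have \<Psi>: "clinear_sop \<Psi>" using cp by (simp add: completely_positive_def)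
  have \<L>: "clinear_sop \<L>" by (rule clinear_sop_presentation[OF pres \<Psi>])
  have "Re (tr (\<L> (ket_bra x x))) \<le> 0"
    by (rule trace_nonincreasing_Re_tr_nonpos[OF \<L> tni psd_ket_bra])
  moreover have "tr (\<L> (ket_bra x x)) = tr (\<Psi> (ket_bra x x)) - 2 * cinner x (G *v x)"
    by (simp add: pres tr_diff tr_add tr_cscale tr_mult_ket_bra tr_ket_bra_mult)
  moreover have "0 \<le> Re (tr (\<Psi> (ket_bra x x)))"
    using psd_tr_nonneg[OF completely_positive_psd[OF cp psd_ket_bra]]
    by (simp add: less_eq_complex_def)
  ultimately show "0 \<le> cinner x (G *v x)"
    using hermitian_cinner_real[OF G] by (simp add: less_eq_complex_def)
qed

theorem lemma1:
  fixes \<L> \<Psi> :: "('n::finite) sop" and G H :: "'n op" and \<mu> :: "'n op measure"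
  assumes pres: "\<And>\<rho>. \<L> \<rho> = \<Psi> \<rho> - (G ** \<rho> + \<rho> ** G) - \<i> *# (H ** \<rho> - \<rho> ** H)"
    and cp: "completely_positive \<Psi>"
    and hG: "hermitian G" and hH: "hermitian H"
    and supp: "supported_trace_zero (jam \<Psi>)"
    and trH: "tr H = 0"
    and tni: "trace_nonincreasing \<L>"
    and haar: "haar \<mu>"
  shows "integral\<^sup>L \<mu> (\<lambda>U. \<L> U ** adj U)
           = - G - (tr G / of_nat CARD('n)) *# mat 1 - \<i> *# H
         \<and> opnorm G \<le> sopnorm \<L>
         \<and> opnorm H \<le> sopnorm \<L>
         \<and> sopnorm \<Psi> \<le> 5 * sopnorm \<L>"
proof -
  have \<Psi>: "clinear_sop \<Psi>" using cp by (simp add: completely_positive_def)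
  have \<L>: "clinear_sop \<L>" by (rule clinear_sop_presentation[OF pres \<Psi>])
  define c where "c = tr G / of_nat CARD('n)"
  have average: "integral\<^sup>L \<mu> (\<lambda>U. \<L> U ** adj U) = - G - c *# mat 1 - \<i> *# H"
    unfolding c_def using supp
    by (intro haar_average_presentation[OF pres \<Psi> _ trH haar]) (simp add: supported_trace_zero_def)
  have "psd G" by (rule presentation_psd[OF pres cp hG tni])
  moreover have "0 \<le> c"
    using psd_tr_nonneg[OF \<open>psd G\<close>] by (simp add: c_def less_eq_complex_def)
  moreover have "opnorm (- G - c *# mat 1 - \<i> *# H) \<le> sopnorm \<L>"
    using opnorm_haar_average_le[OF haar \<L>] by (simp add: average)
  ultimately have G: "opnorm G \<le> sopnorm \<L>" and H: "opnorm H \<le> sopnorm \<L>"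
    using opnorm_le_opnorm_average[OF _ hG hH] by (meson order.trans)+
  have "sopnorm \<Psi> \<le> 5 * sopnorm \<L>"
  proof (rule sopnorm_le)
    fix \<rho> :: "'n op" assume \<rho>: "opnorm \<rho> \<le> 1"
    have "opnorm (\<Psi> \<rho>) = opnorm (\<L> \<rho> + (G ** \<rho> + \<rho> ** G) + \<i> *# (H ** \<rho> - \<rho> ** H))"
      by (simp add: pres)
    also have "\<dots> \<le> opnorm (\<L> \<rho>) + 2 * opnorm G + 2 * opnorm H"
      by (rule opnorm_presentation_terms_le[OF \<rho>])
    finally show "opnorm (\<Psi> \<rho>) \<le> 5 * sopnorm \<L>"
      using opnorm_le_sopnorm[OF \<L> \<rho>] G H by linarith
  qed
  with average G H show ?thesis by (simp add: c_def)
qed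

end
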